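(* Let $X:[0,S]\to\mathbb R$ be any function, $c>0$, $m_0\ge0$ an integer, and let $\Pi_n=\{t_0,\dots,t_n\}$ with $0\le t_0<t_1<\dots<t_n\le S$. Let $N_0\ge m_0$ be such that $J_m=\emptyset$ for all $m\ge N_0$, and let $N\ge N_0$, $N>m_0$. Then $$\sum_{i=1}^n(|X(t_i)-X(t_{i-1})|-c)_+\le V_1+V_2+W_1+W_2+\sum_{i=1}^n\sum_{s\in\{i-1,i\}}|X(t_s)-X(t_s^{N+1})|,$$ where $V_1=\sum_{m=0}^{m_0}\sum_{i\in J_m}\sum_{l=m+1}^{m_0}\sum_{s\in\{i-1,i\}}|X(t_s^l)-X(t_s^{l+1})|$, $W_1=\sum_{m=0}^{m_0}\sum_{i\in J_m}|X(t_i^{m+1})-X(t_{i-1}^{m+1})|$, $V_2=\sum_{m=0}^{\infty}\sum_{i\in J_m}\sum_{l=\bar m+1}^{N}\sum_{s\in\{i-1,i\}}\left(|X(t_s^l)-X(t_s^{l+1})|-2^{-l+\bar m}\frac c3\right)_+$, $W_2=\sum_{m=m_0+1}^{\infty}\sum_{i\in J_m}\left(|X(t_i^{m+1})-X(t_{i-1}^{m+1})|-\frac c3\right)_+$.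
   Context: Fix $S>0$, $q\in(0,1)$, $d(s,t)=|s-t|^q$ on $[0,S]$, and $r\ge4$. For $n\ge0$ let $T_n=\{kr^{-n/q}S:k=0,1,2,\dots\}\cap[0,S]$ and $\pi_n(t)=\max\{s\in T_n:s\le t\}$ for $t\in[0,S]$. For the partition $\Pi_n$ and $m=0,1,2,\dots$ let $J_m=\{i\in\{1,\dots,n\}:r^{-m-1}S^q<d(t_{i-1},t_i)\le r^{-m}S^q\}$. Given $N$, define $t_i^{N+1}=\pi_{N+1}(t_i)$ and recursively $t_i^l=\pi_l(t_i^{l+1})$ for $l=N,N-1,\dots,0$, $i=0,\dots,n$. Write $\bar m=\max\{m,m_0\}$ and $x_+=\max\{x,0\}$. *)

theory Defs
  imports Complex_Main
begin

definition dq :: "real \<Rightarrow> real \<Rightarrow> real \<Rightarrow> real" where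
  "dq q s u = \<bar>s - u\<bar> powr q"

definition Tgrid :: "real \<Rightarrow> real \<Rightarrow> real \<Rightarrow> nat \<Rightarrow> real set" where
  "Tgrid S q r n = {s. \<exists>k::nat. s = real k * r powr (- real n / q) * S} \<inter> {0..S}"

definition pig :: "real \<Rightarrow> real \<Rightarrow> real \<Rightarrow> nat \<Rightarrow> real \<Rightarrow> real" where
  "pig S q r n u = Max {s \<in> Tgrid S q r n. s \<le> u}"

definition Jset :: "real \<Rightarrow> real \<Rightarrow> real \<Rightarrow> nat \<Rightarrow> (nat \<Rightarrow> real) \<Rightarrow> nat \<Rightarrow> nat set" where
  "Jset S q r n t m = {i \<in> {1..n}.
      r powr (- real m - 1) * S powr q < dq q (t (i - 1)) (t i) \<and>
      dq q (t (i - 1)) (t i) \<le> r powr (- real m) * S powr q}"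

text \<open>Auxiliary chain: tchain ... i k = t_i^(N+1-k) for k \<le> N+1.\<close>
primrec tchain :: "real \<Rightarrow> real \<Rightarrow> real \<Rightarrow> nat \<Rightarrow> (nat \<Rightarrow> real) \<Rightarrow> nat \<Rightarrow> nat \<Rightarrow> real" where
  "tchain S q r N t i 0 = pig S q r (N + 1) (t i)"
| "tchain S q r N t i (Suc k) = pig S q r (N - k) (tchain S q r N t i k)"

text \<open>tpt ... l i = t_i^l (meaningful for l \<le> N+1): t_i^(N+1) = pi_(N+1)(t_i),
  t_i^l = pi_l(t_i^(l+1)).\<close>
definition tpt :: "real \<Rightarrow> real \<Rightarrow> real \<Rightarrow> nat \<Rightarrow> (nat \<Rightarrow> real) \<Rightarrow> nat \<Rightarrow> nat \<Rightarrow> real" where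
  "tpt S q r N t l i = tchain S q r N t i (N + 1 - l)"

end

theory Submission
  imports Defs
begin

text \<open>
  For a single interval of scale \<open>m\<close> (i.e. \<open>i \<in> J_m\<close>), connect \<open>t_(i-1)\<close> and \<open>t_i\<close>
  through their grid approximations \<open>t^(N+1), t^N, \<dots>, t^(m+1)\<close> (lemma
  \<open>two_point_chain_bound\<close>). The increment budget \<open>c\<close> is spent as \<open>c/3\<close> per endpoint on
  the chain steps above level \<open>max m m0\<close>, distributed with geometric weights
  (\<open>sum_le_excess_plus_budget\<close>), and \<open>c/3\<close> on the crossing step at level \<open>m+1\<close> when
  \<open>m > m0\<close>; this is \<open>interval_bound\<close>.

  Since every interval lies in some class \<open>J_m\<close> (\<open>partition_interval_has_scale\<close>) and
  the classes vanish beyond \<open>N\<close>, summing these bounds over the classes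
  (\<open>sum_le_sum_over_scales\<close>, \<open>sum_over_scale_classes\<close>) gives the statement.
\<close>

lemma abs_diff_le_sum_steps:
  fixes f :: "nat \<Rightarrow> real"
  assumes "a \<le> b"
  shows "\<bar>f a - f b\<bar> \<le> (\<Sum>l=a..<b. \<bar>f l - f (Suc l)\<bar>)"
proof -
  have "\<bar>f a - f b\<bar> = \<bar>\<Sum>l=a..<b. f l - f (Suc l)\<bar>"
    using sum_Suc_diff'[OF assms, of f] by (simp add: sum_subtractf)
  also have "\<dots> \<le> (\<Sum>l=a..<b. \<bar>f l - f (Suc l)\<bar>)" by (rule sum_abs)
  finally show ?thesis .
qed

text \<open>The weights \<open>2^(k-l)\<close>, \<open>l = k+1..N\<close>, form a partial geometric series, so
  they sum to at most 1.\<close>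
lemma geometric_weights_le_one:
  "(\<Sum>l=k+1..N. 2 powr (- real l + real k)) \<le> (1::real)"
proof -
  have "(\<Sum>l=k+1..N. 2 powr (- real l + real k)) = (\<Sum>j=1..N-k. (1/2::real) ^ j)"
  proof (cases "k \<le> N")
    case True
    have "(\<Sum>l=k+1..N. 2 powr (- real l + real k)) = (\<Sum>j=1..N-k. 2 powr (- real (j + k) + real k))"
      by (rule sum.reindex_bij_witness[of _ "\<lambda>j. j + k" "\<lambda>l. l - k"]) (use True in auto)
    also have "\<dots> = (\<Sum>j=1..N-k. (1/2::real) ^ j)"
      by (intro sum.cong refl) (simp add: powr_minus powr_realpow power_divide inverse_eq_divide)
    finally show ?thesis .
  qed simp
  also have "\<dots> \<le> 1"
  proof -
    have "(\<Sum>j=1..p. (1/2::real) ^ j) = 1 - (1/2) ^ p" for p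
      by (induction p) simp_all
    then show ?thesis by simp
  qed
  finally show ?thesis .
qed

text \<open>Every \<open>d \<in> (0,K]\<close> lies in one of the shells \<open>(r^(-m-1) K, r^(-m) K]\<close>; this is
  what makes the classes \<open>J_m\<close> cover all intervals of the partition.\<close>
lemma scale_exists:
  fixes d K r :: real
  assumes "0 < d" "d \<le> K" "r > 1"
  shows "\<exists>m::nat. r powr (- real m - 1) * K < d \<and> d \<le> r powr (- real m) * K"
proof -
  have rp: "r powr (- real j) * K = K / r ^ j" for j
    using assms(3) by (simp add: powr_minus powr_realpow divide_inverse mult.commute)
  obtain n where "K / d < r ^ n" using real_arch_pow[OF assms(3)] by blast
  then have "r powr (- real n) * K < d"
    unfolding rp using assms by (simp add: divide_less_eq mult.commute)
  moreover have "\<not> r powr (- real 0) * K < d" using assms(2,3) by simp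
  ultimately obtain k where "\<not> r powr (- real k) * K < d" "r powr (- real (Suc k)) * K < d"
    using ex_least_nat_less[of "\<lambda>j. r powr (- real j) * K < d"] by blast
  moreover have "- real (Suc k) = - real k - 1" by simp
  ultimately show ?thesis by (intro exI[of _ k]) (simp only: not_less)
qed

text \<open>Chaining argument for two points \<open>u, v\<close>: pass from \<open>Y\<close> to the finest approximation
  \<open>F (N+1)\<close>, walk down the chains \<open>F N, \<dots>, F (m+1)\<close> at both points, and cross over at
  level \<open>m+1\<close>.\<close>
lemma two_point_chain_bound:
  fixes F :: "nat \<Rightarrow> 'a \<Rightarrow> real" and Y :: "'a \<Rightarrow> real"
  assumes "m \<le> N"
  shows "\<bar>Y u - Y v\<bar> \<le> \<bar>Y u - F (N + 1) u\<bar> + \<bar>Y v - F (N + 1) v\<bar>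
           + (\<Sum>l=m+1..N. \<bar>F l u - F (l + 1) u\<bar>) + (\<Sum>l=m+1..N. \<bar>F l v - F (l + 1) v\<bar>)
           + \<bar>F (m + 1) u - F (m + 1) v\<bar>"
proof -
  have chain: "\<bar>F (m + 1) w - F (N + 1) w\<bar> \<le> (\<Sum>l=m+1..N. \<bar>F l w - F (l + 1) w\<bar>)" for w
    using abs_diff_le_sum_steps[of "m + 1" "N + 1" "\<lambda>l. F l w"] assms
    by (simp add: atLeastLessThanSuc_atLeastAtMost)
  show ?thesis using chain[of u] chain[of v] by linarith
qed

lemma sum_le_excess_plus_budget:
  fixes g :: "nat \<Rightarrow> real" and b :: real
  assumes "b \<ge> 0"
  shows "(\<Sum>l=k+1..N. \<bar>g l\<bar>)
         \<le> (\<Sum>l=k+1..N. max (\<bar>g l\<bar> - 2 powr (- real l + real k) * b) 0) + b"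
proof -
  have "(\<Sum>l=k+1..N. \<bar>g l\<bar>)
        \<le> (\<Sum>l=k+1..N. max (\<bar>g l\<bar> - 2 powr (- real l + real k) * b) 0 + 2 powr (- real l + real k) * b)"
    by (intro sum_mono) linarith
  also have "\<dots> = (\<Sum>l=k+1..N. max (\<bar>g l\<bar> - 2 powr (- real l + real k) * b) 0)
                 + (\<Sum>l=k+1..N. 2 powr (- real l + real k)) * b"
    by (simp add: sum.distrib sum_distrib_right)
  also have "(\<Sum>l=k+1..N. 2 powr (- real l + real k)) * b \<le> b"
    using assms geometric_weights_le_one[of k N] by (intro mult_left_le_one_le sum_nonneg) auto
  finally show ?thesis by simp
qed

text \<open>The chain steps up to
  level \<open>m0\<close> are kept as they are, the steps above level \<open>max m m0\<close> are paid for by the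
  budget \<open>c/3\<close> per endpoint, and the crossing term at level \<open>m+1\<close> is either kept (for
  \<open>m \<le> m0\<close>) or paid for by a further \<open>c/3\<close>; in total the budget is exactly \<open>c\<close>.\<close>
lemma interval_bound:
  fixes F :: "nat \<Rightarrow> nat \<Rightarrow> real" and Y :: "nat \<Rightarrow> real" and c :: real
  assumes "m \<le> N" and "m0 \<le> N" and "c > 0" and "i \<ge> 1"
  shows "max (\<bar>Y i - Y (i - 1)\<bar> - c) 0 \<le>
      (\<Sum>l=m+1..m0. \<Sum>s\<in>{i - 1, i}. \<bar>F l s - F (l + 1) s\<bar>)
    + (\<Sum>l=max m m0 + 1..N. \<Sum>s\<in>{i - 1, i}.
           max (\<bar>F l s - F (l + 1) s\<bar> - 2 powr (- real l + real (max m m0)) * (c / 3)) 0)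
    + (if m \<le> m0 then \<bar>F (m + 1) i - F (m + 1) (i - 1)\<bar> else 0)
    + (if m \<ge> m0 + 1 then max (\<bar>F (m + 1) i - F (m + 1) (i - 1)\<bar> - c / 3) 0 else 0)
    + (\<Sum>s\<in>{i - 1, i}. \<bar>Y s - F (N + 1) s\<bar>)"
    (is "_ \<le> ?A + ?B + ?C + ?D + ?E")
proof -
  define k where "k = max m m0"
  define step where "step l s = \<bar>F l s - F (l + 1) s\<bar>" for l s
  define excess where
    "excess s = (\<Sum>l=k+1..N. max (step l s - 2 powr (- real l + real k) * (c / 3)) 0)" for s
  define w where "w = \<bar>F (m + 1) i - F (m + 1) (i - 1)\<bar>"
  have pair: "(\<Sum>s\<in>{i - 1, i}. h s) = h (i - 1) + h i" for h :: "nat \<Rightarrow> real"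
    using assms(4) by simp
  have tail: "(\<Sum>l=m+1..N. step l s) \<le> (\<Sum>l=m+1..m0. step l s) + excess s + c / 3" for s
  proof -
    have "{m+1..N} = {m+1..m0} \<union> {k+1..N}" using assms(2) by (auto simp: k_def)
    then have "(\<Sum>l=m+1..N. step l s) = (\<Sum>l=m+1..m0. step l s) + (\<Sum>l=k+1..N. step l s)"
      by (simp add: sum.union_disjoint k_def)
    also have "(\<Sum>l=k+1..N. step l s) \<le> excess s + c / 3"
      unfolding excess_def step_def
      using sum_le_excess_plus_budget[of "c / 3" "\<lambda>l. F l s - F (l + 1) s" k N] assms(3) by simp
    finally show ?thesis by simp
  qed
  have A: "?A = (\<Sum>l=m+1..m0. step l (i - 1)) + (\<Sum>l=m+1..m0. step l i)"
    unfolding step_def pair by (rule sum.distrib)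
  have B: "?B = excess (i - 1) + excess i"
    unfolding excess_def step_def k_def pair by (rule sum.distrib)
  have chain: "\<bar>Y i - Y (i - 1)\<bar> \<le> ?E + (\<Sum>l=m+1..N. step l i) + (\<Sum>l=m+1..N. step l (i - 1)) + w"
    using two_point_chain_bound[OF assms(1), of Y i "i - 1" F]
    unfolding pair step_def w_def by linarith
  have W: "w \<le> ?C + ?D + c / 3"
    unfolding w_def using assms(3) by auto
  have "\<bar>Y i - Y (i - 1)\<bar> \<le> ?A + ?B + ?C + ?D + ?E + c"
    using chain tail[of i] tail[of "i - 1"] W A B by linarith
  moreover have "0 \<le> ?A + ?B + ?C + ?D + ?E"
    by (intro add_nonneg_nonneg sum_nonneg) auto
  ultimately show ?thesis by linarith
qed

lemma partition_interval_has_scale: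
  assumes "0 < q" and "r > 1"
    and "0 \<le> t 0" and incr: "\<forall>i<n. t i < t (Suc i)" and "t n \<le> S"
    and i: "i \<in> {1..n}"
  shows "\<exists>m. i \<in> Jset S q r n t m"
proof -
  have mono: "t j \<le> t k" if "j \<le> k" "k \<le> n" for j k
    using lift_Suc_mono_le_ivl[of "{..<n}" t j k] incr that by fastforce
  have step: "t (i - 1) < t i" using incr[rule_format, of "i - 1"] i by auto
  have "0 \<le> t (i - 1)" and "t i \<le> S"
    using mono[of 0 "i - 1"] mono[of i n] assms(3,5) i by force+
  then have len: "0 < t i - t (i - 1)" "t i - t (i - 1) \<le> S" using step by auto
  have d: "dq q (t (i - 1)) (t i) = (t i - t (i - 1)) powr q" unfolding dq_def using step by simp
  have "0 < dq q (t (i - 1)) (t i)" and "dq q (t (i - 1)) (t i) \<le> S powr q"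
    unfolding d using len assms(1) by (auto intro: powr_mono2)
  then obtain m where "r powr (- real m - 1) * S powr q < dq q (t (i - 1)) (t i)"
      "dq q (t (i - 1)) (t i) \<le> r powr (- real m) * S powr q"
    using scale_exists assms(2) by blast
  then show ?thesis using i unfolding Jset_def by blast
qed

lemma sum_le_sum_over_scales:
  fixes h e :: "'a \<Rightarrow> real" and G :: "nat \<Rightarrow> 'a \<Rightarrow> real" and J :: "nat \<Rightarrow> 'a set"
  assumes fin: "\<And>m. finite (J m)"
    and cover: "\<And>i. i \<in> I \<Longrightarrow> \<exists>m\<le>N. i \<in> J m"
    and bound: "\<And>m i. i \<in> I \<Longrightarrow> i \<in> J m \<Longrightarrow> m \<le> N \<Longrightarrow> h i \<le> G m i + e i"
    and nonneg: "\<And>m i. i \<in> J m \<Longrightarrow> 0 \<le> G m i"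
  shows "(\<Sum>i\<in>I. h i) \<le> (\<Sum>m\<le>N. \<Sum>i\<in>J m. G m i) + (\<Sum>i\<in>I. e i)"
proof -
  define scale where "scale i = (SOME m. m \<le> N \<and> i \<in> J m)" for i
  have scale: "scale i \<le> N \<and> i \<in> J (scale i)" if "i \<in> I" for i
    unfolding scale_def using someI_ex[OF cover[OF that]] .
  have "(\<Sum>i\<in>I. h i) \<le> (\<Sum>i\<in>I. G (scale i) i) + (\<Sum>i\<in>I. e i)"
    unfolding sum.distrib[symmetric] using scale bound by (intro sum_mono) blast
  also have "(\<Sum>i\<in>I. G (scale i) i) = (\<Sum>p\<in>(\<lambda>i. (scale i, i)) ` I. case_prod G p)"
    by (subst sum.reindex) (auto intro: inj_onI)
  also have "\<dots> \<le> (\<Sum>p\<in>Sigma {..N} J. case_prod G p)"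
    using scale fin nonneg by (intro sum_mono2) auto
  also have "\<dots> = (\<Sum>m\<le>N. \<Sum>i\<in>J m. G m i)"
    using fin by (simp add: sum.Sigma)
  finally show ?thesis by simp
qed

text \<open>Terms of \<open>a\<close> and the kept crossing
  terms only occur for \<open>m \<le> m0\<close>, and all classes beyond \<open>N\<close> are empty, so the series
  are finite sums.\<close>
lemma sum_over_scale_classes:
  fixes h e :: "'a \<Rightarrow> real" and a b w :: "nat \<Rightarrow> 'a \<Rightarrow> real" and J :: "nat \<Rightarrow> 'a set"
  assumes bound: "\<And>m i. i \<in> I \<Longrightarrow> i \<in> J m \<Longrightarrow> m \<le> N \<Longrightarrow>
       h i \<le> a m i + b m i + (if m \<le> m0 then w m i else 0)
             + (if m \<ge> m0 + 1 then max (w m i - c / 3) 0 else 0) + e i"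
    and fin: "\<And>m. finite (J m)" and vanish: "\<And>m. N < m \<Longrightarrow> J m = {}" and "m0 \<le> N"
    and cover: "\<And>i. i \<in> I \<Longrightarrow> \<exists>m. i \<in> J m"
    and a_nonneg: "\<And>m i. 0 \<le> a m i" and a_vanish: "\<And>m i. m0 < m \<Longrightarrow> a m i = 0"
    and b_nonneg: "\<And>m i. 0 \<le> b m i" and w_nonneg: "\<And>m i. 0 \<le> w m i"
  shows "(\<Sum>i\<in>I. h i)
    \<le> (\<Sum>m=0..m0. \<Sum>i\<in>J m. a m i) + (\<Sum>m. \<Sum>i\<in>J m. b m i) + (\<Sum>m=0..m0. \<Sum>i\<in>J m. w m i)
      + (\<Sum>m. if m \<ge> m0 + 1 then (\<Sum>i\<in>J m. max (w m i - c / 3) 0) else 0) + (\<Sum>i\<in>I. e i)"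
proof -
  define v where "v m i = (if m \<ge> m0 + 1 then max (w m i - c / 3) 0 else 0)" for m i
  have to_series: "(\<Sum>m\<le>N. f m) = (\<Sum>m. f m)"
    if "\<And>m. N < m \<Longrightarrow> f m = 0" for f :: "nat \<Rightarrow> real"
    using that by (intro suminf_finite[symmetric]) auto
  have to_m0: "(\<Sum>m\<le>N. f m) = (\<Sum>m=0..m0. f m)"
    if "\<And>m. m0 < m \<Longrightarrow> f m = 0" for f :: "nat \<Rightarrow> real"
    using that \<open>m0 \<le> N\<close> by (intro sum.mono_neutral_right) auto
  have "(\<Sum>i\<in>I. h i)
      \<le> (\<Sum>m\<le>N. \<Sum>i\<in>J m. a m i + b m i + (if m \<le> m0 then w m i else 0) + v m i) + (\<Sum>i\<in>I. e i)"
  proof (rule sum_le_sum_over_scales[OF fin])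
    show "\<exists>m\<le>N. i \<in> J m" if "i \<in> I" for i
      using cover[OF that] vanish by (metis empty_iff not_le)
  qed (use bound a_nonneg b_nonneg w_nonneg in \<open>auto simp: v_def intro!: add_nonneg_nonneg\<close>)
  moreover have "(\<Sum>m\<le>N. \<Sum>i\<in>J m. a m i) = (\<Sum>m=0..m0. \<Sum>i\<in>J m. a m i)"
    by (rule to_m0) (simp add: a_vanish)
  moreover have "(\<Sum>m\<le>N. \<Sum>i\<in>J m. b m i) = (\<Sum>m. \<Sum>i\<in>J m. b m i)"
    by (rule to_series) (simp add: vanish)
  moreover have "(\<Sum>m\<le>N. \<Sum>i\<in>J m. if m \<le> m0 then w m i else 0) = (\<Sum>m=0..m0. \<Sum>i\<in>J m. w m i)"
    by (subst to_m0) (auto intro!: sum.cong)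
  moreover have "(\<Sum>m\<le>N. \<Sum>i\<in>J m. v m i)
      = (\<Sum>m. if m \<ge> m0 + 1 then (\<Sum>i\<in>J m. max (w m i - c / 3) 0) else 0)"
    by (subst to_series[symmetric]) (auto simp: vanish v_def intro!: sum.cong)
  ultimately show ?thesis by (simp only: sum.distrib)
qed

theorem lemma1:
  fixes S q r c :: real and m0 N0 N n :: nat
    and X :: "real \<Rightarrow> real" and t :: "nat \<Rightarrow> real"
  assumes "S > 0" and "0 < q" and "q < 1" and "r \<ge> 4" and "c > 0"
    and "0 \<le> t 0" and "\<forall>i<n. t i < t (Suc i)" and "t n \<le> S"
    and "N0 \<ge> m0" and "\<forall>m\<ge>N0. Jset S q r n t m = {}"
    and "N \<ge> N0" and "N > m0"
  shows "(\<Sum>i=1..n. max (\<bar>X (t i) - X (t (i - 1))\<bar> - c) 0)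
    \<le> (\<Sum>m=0..m0. \<Sum>i\<in>Jset S q r n t m. \<Sum>l=m+1..m0. \<Sum>s\<in>{i - 1, i}.
           \<bar>X (tpt S q r N t l s) - X (tpt S q r N t (l + 1) s)\<bar>)
     + (\<Sum>m. \<Sum>i\<in>Jset S q r n t m. \<Sum>l=max m m0 + 1..N. \<Sum>s\<in>{i - 1, i}.
           max (\<bar>X (tpt S q r N t l s) - X (tpt S q r N t (l + 1) s)\<bar>
                - 2 powr (- real l + real (max m m0)) * (c / 3)) 0)
     + (\<Sum>m=0..m0. \<Sum>i\<in>Jset S q r n t m.
           \<bar>X (tpt S q r N t (m + 1) i) - X (tpt S q r N t (m + 1) (i - 1))\<bar>)
     + (\<Sum>m. if m \<ge> m0 + 1 then (\<Sum>i\<in>Jset S q r n t m.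
           max (\<bar>X (tpt S q r N t (m + 1) i) - X (tpt S q r N t (m + 1) (i - 1))\<bar> - c / 3) 0)
         else 0)
     + (\<Sum>i=1..n. \<Sum>s\<in>{i - 1, i}. \<bar>X (t s) - X (tpt S q r N t (N + 1) s)\<bar>)"
proof (rule sum_over_scale_classes, rule interval_bound)
  show "finite (Jset S q r n t m)" for m unfolding Jset_def by simp
  show "Jset S q r n t m = {}" if "N < m" for m using assms(10,11) that by simp
  show "\<exists>m. i \<in> Jset S q r n t m" if "i \<in> {1..n}" for i
    using partition_interval_has_scale[OF assms(2) _ assms(6,7,8) that] assms(4) by simp
qed (use assms(5,12) in \<open>auto intro!: sum_nonneg\<close>)

end
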